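(* Let $G$ be an undirected graph with double cover $H$, let $\alpha\in(0,1]$, $s\in\mathbb{R}^{2n}_{\ge0}$ and a nonnegative residual $r\in\mathbb{R}^{2n}_{\ge0}$, and let $\mathrm{apr}(\alpha,s,r)$ be the approximate PageRank vector defined with respect to $H$. Then $p=\sigma\circ\mathrm{apr}(\alpha,s,r)$ satisfies, for every $u\in V_G$, \[p(u_1)\le\alpha\big(s(u_1)+r(u_2)\big)+(1-\alpha)(pW)(u_1),\qquad p(u_2)\le\alpha\big(s(u_2)+r(u_1)\big)+(1-\alpha)(pW)(u_2).\]
   Context: $G$ has $n$ vertices. The double cover $H$ has vertices $v_1,v_2$ per $v\in V_G$ and edges $\{u_1,v_2\},\{u_2,v_1\}$ per $\{u,v\}\in E_G$. $W=\frac12(I+D_H^{-1}A_H)$ is the lazy random walk matrix of $H$ (row vectors act by $p\mapsto pW$). $\mathrm{pr}(\alpha,s)$ is the unique solution of $\mathrm{pr}=\alpha s+(1-\alpha)\mathrm{pr}\,W$; $\mathrm{apr}(\alpha,s,r)$ is the vector $q$ with $q+\mathrm{pr}(\alpha,r)=\mathrm{pr}(\alpha,s)$. The simplify operator is given by $(\sigma\circ p)(u_1)=\max(0,p(u_1)-p(u_2))$, $(\sigma\circ p)(u_2)=\max(0,p(u_2)-p(u_1))$ for $p\in\mathbb{R}^{2n}$. *)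

theory Defs
  imports Complex_Main
begin

text \<open>Double cover H: vertex set 'v \<times> bool, where (u, False) is u_1 and (u, True) is u_2.\<close>

definition dc_adj :: "('v \<Rightarrow> 'v \<Rightarrow> bool) \<Rightarrow> ('v \<times> bool) \<Rightarrow> ('v \<times> bool) \<Rightarrow> bool" where
  "dc_adj E x y = (E (fst x) (fst y) \<and> snd x \<noteq> snd y)"

definition dc_deg :: "('v \<Rightarrow> 'v \<Rightarrow> bool) \<Rightarrow> ('v \<times> bool) \<Rightarrow> real" where
  "dc_deg E x = real (card {y. dc_adj E x y})"

definition lazy_walk :: "('v \<Rightarrow> 'v \<Rightarrow> bool) \<Rightarrow> ('v \<times> bool) \<Rightarrow> ('v \<times> bool) \<Rightarrow> real" where
  "lazy_walk E x y = (1/2) * ((if x = y then 1 else 0)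
        + (if dc_adj E x y then 1 else 0) / dc_deg E x)"

definition vecmat :: "('a::finite \<Rightarrow> real) \<Rightarrow> ('a \<Rightarrow> 'a \<Rightarrow> real) \<Rightarrow> 'a \<Rightarrow> real" where
  "vecmat p M y = (\<Sum>x\<in>UNIV. p x * M x y)"

definition pagerank :: "('v::finite \<Rightarrow> 'v \<Rightarrow> bool) \<Rightarrow> real \<Rightarrow> ('v \<times> bool \<Rightarrow> real) \<Rightarrow> ('v \<times> bool \<Rightarrow> real)" where
  "pagerank E \<alpha> s = (THE pr. \<forall>x. pr x = \<alpha> * s x + (1 - \<alpha>) * vecmat pr (lazy_walk E) x)"

definition apr :: "('v::finite \<Rightarrow> 'v \<Rightarrow> bool) \<Rightarrow> real \<Rightarrow> ('v \<times> bool \<Rightarrow> real) \<Rightarrow> ('v \<times> bool \<Rightarrow> real) \<Rightarrow> ('v \<times> bool \<Rightarrow> real)" where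
  "apr E \<alpha> s r = (\<lambda>x. pagerank E \<alpha> s x - pagerank E \<alpha> r x)"

definition simplify :: "('v \<times> bool \<Rightarrow> real) \<Rightarrow> ('v \<times> bool \<Rightarrow> real)" where
  "simplify p = (\<lambda>(u, i). max 0 (p (u, i) - p (u, \<not> i)))"

end

theory Submission imports Defs "HOL-Analysis.Analysis" begin

text \<open>By linearity, apr(\<alpha>, s, r) solves x = \<alpha> (s - r) + (1 - \<alpha>) x W; such solutions are
  unique since W is substochastic. The lazy walk of the double cover commutes with the
  involution u_1 \<leftrightarrow> u_2, so x(u_1) - x(u_2) solves the same kind of equation with
  right-hand side (s - r)(u_1) - (s - r)(u_2). Taking positive parts only weakens the
  walk term, since xW(u_1) - xW(u_2) = (x - x \<circ> swap)W(u_1) \<le> (\<sigma> \<circ> x)W(u_1), and the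
  positive part of (s - r)(u_1) - (s - r)(u_2) is at most s(u_1) + r(u_2).\<close>

lemma vecmat_diff: "vecmat (\<lambda>x. p x - q x) M y = vecmat p M y - vecmat q M y"
  unfolding vecmat_def by (simp add: left_diff_distrib sum_subtractf)

lemma vecmat_mono:
  assumes "\<And>x. p x \<le> q x" and "\<And>x. 0 \<le> M x y"
  shows "vecmat p M y \<le> vecmat q M y"
  unfolding vecmat_def by (intro sum_mono mult_right_mono) (use assms in auto)

lemma vecmat_nonneg:
  assumes "\<And>x. 0 \<le> p x" and "\<And>x. 0 \<le> M x y"
  shows "0 \<le> vecmat p M y"
  unfolding vecmat_def using assms by (simp add: sum_nonneg)

lemma substochastic_fixpoint_zero:
  fixes M :: "'a::finite \<Rightarrow> 'a \<Rightarrow> real"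
  assumes M_nonneg: "\<And>x y. 0 \<le> M x y" and M_rows: "\<And>x. (\<Sum>y\<in>UNIV. M x y) \<le> 1"
    and \<alpha>: "0 < \<alpha>" "\<alpha> \<le> 1"
    and v: "\<And>y. v y = (1 - \<alpha>) * vecmat v M y"
  shows "v = (\<lambda>_. 0)"
proof -
  have "(\<Sum>y\<in>UNIV. \<bar>v y\<bar>) \<le> (\<Sum>y\<in>UNIV. (1 - \<alpha>) * vecmat (\<lambda>x. \<bar>v x\<bar>) M y)"
  proof (rule sum_mono)
    fix y
    have "\<bar>vecmat v M y\<bar> \<le> vecmat (\<lambda>x. \<bar>v x\<bar>) M y"
      unfolding vecmat_def using sum_abs[of "\<lambda>x. v x * M x y" UNIV] M_nonneg
      by (simp add: abs_mult)
    then show "\<bar>v y\<bar> \<le> (1 - \<alpha>) * vecmat (\<lambda>x. \<bar>v x\<bar>) M y"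
      using \<alpha> v[of y] by (simp add: abs_mult mult_left_mono)
  qed
  also have "\<dots> = (1 - \<alpha>) * (\<Sum>x\<in>UNIV. \<bar>v x\<bar> * (\<Sum>y\<in>UNIV. M x y))"
    unfolding vecmat_def sum_distrib_left[symmetric]
    by (subst sum.swap) (simp only: sum_distrib_left)
  also have "\<dots> \<le> (1 - \<alpha>) * (\<Sum>x\<in>UNIV. \<bar>v x\<bar>)"
    using \<alpha> M_rows by (intro mult_left_mono sum_mono) (auto intro: mult_left_le)
  finally have "\<alpha> * (\<Sum>x\<in>UNIV. \<bar>v x\<bar>) \<le> 0"
    by (simp add: algebra_simps)
  moreover have "0 \<le> (\<Sum>x\<in>UNIV. \<bar>v x\<bar>)"
    by (simp add: sum_nonneg)
  ultimately have "(\<Sum>x\<in>UNIV. \<bar>v x\<bar>) = 0"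
    using \<alpha> by (auto simp: mult_le_0_iff)
  then show ?thesis
    by (auto simp: sum_nonneg_eq_0_iff)
qed

lemma substochastic_fixpoint_unique:
  fixes M :: "'a::finite \<Rightarrow> 'a \<Rightarrow> real"
  assumes "\<And>x y. 0 \<le> M x y" and "\<And>x. (\<Sum>y\<in>UNIV. M x y) \<le> 1"
    and "0 < \<alpha>" "\<alpha> \<le> 1"
    and p: "\<And>x. p x = \<alpha> * d x + (1 - \<alpha>) * vecmat p M x"
    and q: "\<And>x. q x = \<alpha> * d x + (1 - \<alpha>) * vecmat q M x"
  shows "p = q"
proof -
  have "(\<lambda>x. p x - q x) = (\<lambda>_. 0)"
  proof (rule substochastic_fixpoint_zero[OF assms(1-4)])
    show "p y - q y = (1 - \<alpha>) * vecmat (\<lambda>x. p x - q x) M y" for y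
      by (subst p, subst q) (simp add: vecmat_diff algebra_simps)
  qed
  then show ?thesis
    by (simp add: fun_eq_iff)
qed

text \<open>Existence is finite-dimensional linear algebra: the map x \<mapsto> x - (1 - \<alpha>) x M
  is injective by the previous lemma, hence surjective.\<close>

lemma substochastic_fixpoint_exists:
  fixes M :: "'a::finite \<Rightarrow> 'a \<Rightarrow> real"
  assumes "\<And>x y. 0 \<le> M x y" and "\<And>x. (\<Sum>y\<in>UNIV. M x y) \<le> 1"
    and "0 < \<alpha>" "\<alpha> \<le> 1"
  shows "\<exists>p. \<forall>x. p x = \<alpha> * d x + (1 - \<alpha>) * vecmat p M x"
proof -
  define F :: "real^'a \<Rightarrow> real^'a"
    where "F v = (\<chi> y. v$y - (1 - \<alpha>) * vecmat (($) v) M y)" for v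
  have lin: "linear F"
    by (rule linearI)
      (simp_all add: F_def vec_eq_iff vecmat_def sum.distrib sum_distrib_left algebra_simps)
  have "inj F"
    unfolding linear_injective_0[OF lin]
  proof (intro allI impI)
    fix v assume "F v = 0"
    then have "v$y = (1 - \<alpha>) * vecmat (($) v) M y" for y
      by (simp add: F_def vec_eq_iff)
    then have "($) v = (\<lambda>_. 0)"
      by (rule substochastic_fixpoint_zero[OF assms])
    then show "v = 0"
      by (simp add: vec_eq_iff fun_eq_iff)
  qed
  then obtain v where "F v = (\<chi> x. \<alpha> * d x)"
    using linear_inj_imp_surj[OF lin] by (metis surjD)
  then have "\<forall>x. v$x = \<alpha> * d x + (1 - \<alpha>) * vecmat (($) v) M x"
    by (simp add: F_def vec_eq_iff algebra_simps)
  then show ?thesis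
    by blast
qed

lemma substochastic_fixpoint_ex1:
  fixes M :: "'a::finite \<Rightarrow> 'a \<Rightarrow> real"
  assumes "\<And>x y. 0 \<le> M x y" and "\<And>x. (\<Sum>y\<in>UNIV. M x y) \<le> 1"
    and "0 < \<alpha>" "\<alpha> \<le> 1"
  shows "\<exists>!p. \<forall>x. p x = \<alpha> * d x + (1 - \<alpha>) * vecmat p M x"
proof (rule ex_ex1I)
  show "\<exists>p. \<forall>x. p x = \<alpha> * d x + (1 - \<alpha>) * vecmat p M x"
    by (rule substochastic_fixpoint_exists[OF assms])
  show "p = q" if "\<forall>x. p x = \<alpha> * d x + (1 - \<alpha>) * vecmat p M x"
    and "\<forall>x. q x = \<alpha> * d x + (1 - \<alpha>) * vecmat q M x" for p q
    using substochastic_fixpoint_unique[where M = M, OF assms] that by blast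
qed

lemma lazy_walk_nonneg: "0 \<le> lazy_walk E x y"
  unfolding lazy_walk_def dc_deg_def by auto

lemma lazy_walk_row_sum_le_1:
  "(\<Sum>y\<in>UNIV. lazy_walk (E :: 'v::finite \<Rightarrow> 'v \<Rightarrow> bool) x y) \<le> 1"
proof -
  have "(\<Sum>y\<in>UNIV. (if dc_adj E x y then 1 else 0) / dc_deg E x) \<le> (1::real)"
    unfolding dc_deg_def
    by (simp add: sum_divide_distrib[symmetric] sum.If_cases divide_le_eq_1)
  moreover have "(\<Sum>y\<in>UNIV. lazy_walk E x y) = 1/2 * ((\<Sum>y\<in>UNIV. if x = y then 1 else 0)
      + (\<Sum>y\<in>UNIV. (if dc_adj E x y then 1 else 0) / dc_deg E x))"
    unfolding lazy_walk_def by (simp only: sum.distrib[symmetric] sum_distrib_left)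
  ultimately show ?thesis
    by simp
qed

lemma pagerank_fixpoint:
  fixes E :: "'v::finite \<Rightarrow> 'v \<Rightarrow> bool"
  assumes "0 < \<alpha>" "\<alpha> \<le> 1"
  shows "pagerank E \<alpha> s x = \<alpha> * s x + (1 - \<alpha>) * vecmat (pagerank E \<alpha> s) (lazy_walk E) x"
proof -
  have "\<exists>!p. \<forall>x. p x = \<alpha> * s x + (1 - \<alpha>) * vecmat p (lazy_walk E) x"
    by (rule substochastic_fixpoint_ex1[OF lazy_walk_nonneg lazy_walk_row_sum_le_1 assms])
  from theI'[OF this] show ?thesis
    unfolding pagerank_def by blast
qed

lemma apr_fixpoint:
  fixes E :: "'v::finite \<Rightarrow> 'v \<Rightarrow> bool"
  assumes "0 < \<alpha>" "\<alpha> \<le> 1"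
  shows "apr E \<alpha> s r x
    = \<alpha> * (s x - r x) + (1 - \<alpha>) * vecmat (apr E \<alpha> s r) (lazy_walk E) x"
  unfolding apr_def
  using pagerank_fixpoint[OF assms, of E s x] pagerank_fixpoint[OF assms, of E r x]
  by (simp add: vecmat_diff algebra_simps)

definition dc_swap :: "'v \<times> bool \<Rightarrow> 'v \<times> bool" where
  "dc_swap x = (fst x, \<not> snd x)"

lemma dc_swap_Pair [simp]: "dc_swap (u, i) = (u, \<not> i)"
  by (simp add: dc_swap_def)

lemma dc_swap_swap [simp]: "dc_swap (dc_swap x) = x"
  by (simp add: dc_swap_def)

lemma dc_swap_inject [simp]: "dc_swap x = dc_swap y \<longleftrightarrow> x = y"
  by (metis dc_swap_swap)

lemma bij_dc_swap: "bij dc_swap"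
  by (metis bijI' dc_swap_swap)

lemma dc_adj_swap: "dc_adj E (dc_swap x) (dc_swap y) = dc_adj E x y"
  by (simp add: dc_adj_def dc_swap_def)

lemma dc_deg_swap: "dc_deg E (dc_swap x) = dc_deg E x"
proof -
  have "y \<in> dc_swap ` {y. dc_adj E x y} \<longleftrightarrow> dc_adj E (dc_swap x) y" for y
    using dc_adj_swap[of E "dc_swap x" y] by (metis dc_swap_swap image_iff mem_Collect_eq)
  then have "{y. dc_adj E (dc_swap x) y} = dc_swap ` {y. dc_adj E x y}"
    by blast
  then show ?thesis
    unfolding dc_deg_def
    using card_image[OF inj_on_subset[OF bij_is_inj[OF bij_dc_swap] subset_UNIV]] by simp
qed

lemma lazy_walk_swap: "lazy_walk E (dc_swap x) (dc_swap y) = lazy_walk E x y"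
  by (simp add: lazy_walk_def dc_deg_swap dc_adj_swap)

lemma vecmat_swap:
  assumes "\<And>x y. M (dc_swap x) (dc_swap y) = M x y"
  shows "vecmat p M (dc_swap y) = vecmat (\<lambda>x. p (dc_swap x)) M y"
  unfolding vecmat_def
  by (subst sum.reindex_bij_betw[OF bij_dc_swap, symmetric]) (simp add: assms)

lemma simplify_eq: "simplify p x = max 0 (p x - p (dc_swap x))"
  by (cases x) (simp add: simplify_def dc_swap_def)

lemma simplify_subsolution:
  fixes M :: "'v::finite \<times> bool \<Rightarrow> 'v \<times> bool \<Rightarrow> real"
  assumes M_nonneg: "\<And>x y. 0 \<le> M x y" and M_swap: "\<And>x y. M (dc_swap x) (dc_swap y) = M x y"
    and \<alpha>: "0 \<le> \<alpha>" "\<alpha> \<le> 1"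
    and p: "\<And>x. p x = \<alpha> * d x + (1 - \<alpha>) * vecmat p M x"
  shows "simplify p y \<le> \<alpha> * simplify d y + (1 - \<alpha>) * vecmat (simplify p) M y"
proof -
  have "vecmat p M y - vecmat p M (dc_swap y) = vecmat (\<lambda>x. p x - p (dc_swap x)) M y"
    by (simp add: vecmat_swap[where M = M, OF M_swap] vecmat_diff)
  also have "\<dots> \<le> vecmat (simplify p) M y"
    by (rule vecmat_mono) (simp_all add: simplify_eq M_nonneg)
  finally have walk: "vecmat p M y - vecmat p M (dc_swap y) \<le> vecmat (simplify p) M y" .
  have "p y - p (dc_swap y)
      = \<alpha> * (d y - d (dc_swap y)) + (1 - \<alpha>) * (vecmat p M y - vecmat p M (dc_swap y))"
    by (subst (1 2) p) (simp add: algebra_simps)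
  also have "\<dots> \<le> \<alpha> * simplify d y + (1 - \<alpha>) * vecmat (simplify p) M y"
    using \<alpha> walk by (intro add_mono mult_left_mono) (simp_all add: simplify_eq)
  finally show ?thesis
    using \<alpha> by (simp add: simplify_eq vecmat_nonneg M_nonneg)
qed

lemma simplify_diff_le:
  assumes "\<And>x. 0 \<le> s x" and "\<And>x. 0 \<le> r x"
  shows "simplify (\<lambda>x. s x - r x) y \<le> s y + r (dc_swap y)"
  using assms(1)[of y] assms(1)[of "dc_swap y"] assms(2)[of y] assms(2)[of "dc_swap y"]
  by (simp add: simplify_eq)

theorem lemma5:
  fixes E :: "'v::finite \<Rightarrow> 'v \<Rightarrow> bool"
    and \<alpha> :: real and s r :: "'v \<times> bool \<Rightarrow> real"
  assumes undirected: "\<forall>u v. E u v = E v u"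
    and alpha: "0 < \<alpha>" "\<alpha> \<le> 1"
    and s_nonneg: "\<forall>x. 0 \<le> s x"
    and r_nonneg: "\<forall>x. 0 \<le> r x"
  shows "\<forall>u. simplify (apr E \<alpha> s r) (u, False)
              \<le> \<alpha> * (s (u, False) + r (u, True))
                + (1 - \<alpha>) * vecmat (simplify (apr E \<alpha> s r)) (lazy_walk E) (u, False)
          \<and> simplify (apr E \<alpha> s r) (u, True)
              \<le> \<alpha> * (s (u, True) + r (u, False))
                + (1 - \<alpha>) * vecmat (simplify (apr E \<alpha> s r)) (lazy_walk E) (u, True)"
proof -
  have "simplify (apr E \<alpha> s r) y
      \<le> \<alpha> * (s y + r (dc_swap y)) + (1 - \<alpha>) * vecmat (simplify (apr E \<alpha> s r)) (lazy_walk E) y"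
    for y
  proof -
    have "simplify (apr E \<alpha> s r) y
        \<le> \<alpha> * simplify (\<lambda>x. s x - r x) y + (1 - \<alpha>) * vecmat (simplify (apr E \<alpha> s r)) (lazy_walk E) y"
      using alpha
      by (intro simplify_subsolution lazy_walk_nonneg lazy_walk_swap apr_fixpoint) simp_all
    also have "\<dots> \<le> \<alpha> * (s y + r (dc_swap y)) + (1 - \<alpha>) * vecmat (simplify (apr E \<alpha> s r)) (lazy_walk E) y"
      using alpha
      by (intro add_mono mult_left_mono order.refl simplify_diff_le s_nonneg[rule_format]
          r_nonneg[rule_format]) simp
    finally show ?thesis .
  qed
  from this[of "(_, False)"] this[of "(_, True)"] show ?thesis
    by simp
qed

end
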